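(* Let $G=\bigl((f_j)_{j=1}^n;(\mu^{R})_{\emptyset\ne R\subseteq[n]}\bigr)$ be an $n$-resource selection game. (a) For every nonempty $R\subseteq[n]$, every two Nash equilibria $s,s'$ of $G$, every $k$ with $s_k(R)>0$ and every $k'$ with $s'_{k'}(R)>0$, we have $h^s_k=h^{s'}_{k'}$. (b) If there is no real number $h$ that is a plateau height of two distinct functions $f_j,f_{j'}$ ($j\ne j'$), then $\mu^s_j=\mu^{s'}_j$ for every $j\in[n]$ and every two Nash equilibria $s,s'$ of $G$.
   Context: Write $[n]=\{1,\ldots,n\}$ and $\mathbb{R}_{\ge}=[0,\infty)$. An $n$-resource selection game is a pair $G=\bigl((f_j)_{j=1}^n;(\mu^{R})_{\emptyset\ne R\subseteq[n]}\bigr)$ where each $f_j:\mathbb{R}_{\ge}\to\mathbb{R}$ is nondecreasing and $\mu^R\in\mathbb{R}_{\ge}$ for every nonempty $R\subseteq[n]$. A consumption profile is a map $s$ assigning to each nonempty $R\subseteq[n]$ a vector $s(R)\in\mathbb{R}_{\ge}^{[n]}$ with $s_j(R)=0$ for $j\notin R$ and $\sum_{j}s_j(R)=\mu^R$. The load of resource $j$ is $\mu^s_j=\sum_{R}s_j(R)$ and its cost is $h^s_j=f_j(\mu^s_j)$. $s$ is a Nash equilibrium if for every nonempty $R$, every $k$ with $s_k(R)>0$ and every $j\in R$, $h^s_k\le h^s_j$. A real number $h$ is a plateau height of a nondecreasing $f$ if there exist $x\ne y$ with $f(x)=f(y)=h$. *)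

theory Defs
  imports Complex_Main
begin

text \<open>Resources are indexed by {1..n}; f j is the cost function of resource j (only its
restriction to [0,\<infinity>) matters), mu R is the demand of the player class R.
A consumption profile is a function s :: nat set \<Rightarrow> nat \<Rightarrow> real; only its values on
nonempty R \<subseteq> {1..n} and j \<in> {1..n} are relevant.\<close>

definition coalitions :: "nat \<Rightarrow> nat set set" where
  "coalitions n = {R. R \<subseteq> {1..n} \<and> R \<noteq> {}}"

definition is_game :: "nat \<Rightarrow> (nat \<Rightarrow> real \<Rightarrow> real) \<Rightarrow> (nat set \<Rightarrow> real) \<Rightarrow> bool" where
  "is_game n f mu \<longleftrightarrow>
     (\<forall>j\<in>{1..n}. mono_on {0..} (f j)) \<and> (\<forall>R\<in>coalitions n. mu R \<ge> 0)"

definition consumption_profile ::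
  "nat \<Rightarrow> (nat set \<Rightarrow> real) \<Rightarrow> (nat set \<Rightarrow> nat \<Rightarrow> real) \<Rightarrow> bool" where
  "consumption_profile n mu s \<longleftrightarrow>
     (\<forall>R\<in>coalitions n.
        (\<forall>j\<in>{1..n}. s R j \<ge> 0) \<and>
        (\<forall>j\<in>{1..n}. j \<notin> R \<longrightarrow> s R j = 0) \<and>
        (\<Sum>j\<in>{1..n}. s R j) = mu R)"

definition load :: "nat \<Rightarrow> (nat set \<Rightarrow> nat \<Rightarrow> real) \<Rightarrow> nat \<Rightarrow> real" where
  "load n s j = (\<Sum>R\<in>coalitions n. s R j)"

definition cost :: "nat \<Rightarrow> (nat \<Rightarrow> real \<Rightarrow> real) \<Rightarrow> (nat set \<Rightarrow> nat \<Rightarrow> real) \<Rightarrow> nat \<Rightarrow> real" where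
  "cost n f s j = f j (load n s j)"

definition nash_equilibrium ::
  "nat \<Rightarrow> (nat \<Rightarrow> real \<Rightarrow> real) \<Rightarrow> (nat set \<Rightarrow> real) \<Rightarrow> (nat set \<Rightarrow> nat \<Rightarrow> real) \<Rightarrow> bool" where
  "nash_equilibrium n f mu s \<longleftrightarrow> consumption_profile n mu s \<and>
     (\<forall>R\<in>coalitions n. \<forall>k\<in>{1..n}. s R k > 0 \<longrightarrow>
        (\<forall>j\<in>R. cost n f s k \<le> cost n f s j))"

definition plateau_height :: "(real \<Rightarrow> real) \<Rightarrow> real \<Rightarrow> bool" where
  "plateau_height g h \<longleftrightarrow> (\<exists>x y. x \<ge> 0 \<and> y \<ge> 0 \<and> x \<noteq> y \<and> g x = h \<and> g y = h)"

end

theory Submission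
  imports Defs
begin

text \<open>If s is an equilibrium, every class R pays the minimum cost over R on all of
its demand, so against any other profile s' we get the variational inequality
sum_j h(s)_j mu(s)_j \<le> sum_j h(s)_j mu(s')_j. Adding it to the symmetric inequality gives
sum_j (h(s)_j - h(s')_j) (mu(s)_j - mu(s')_j) \<le> 0, while monotonicity of the f_j makes every
term nonnegative; hence every term vanishes and each resource has the same cost in s and s'. For (b), the total load on the resources of cost H is the total demand of the
classes whose minimum cost is H, so it is the same in s and s'. If the loads of j differ, some
other resource of the same cost H has a different load too, and both cost functions then have a
plateau at height H.\<close>

lemma coalitionsD: "R \<in> coalitions n \<Longrightarrow> finite R \<and> R \<noteq> {} \<and> R \<subseteq> {1..n}"
  by (auto simp: coalitions_def intro: finite_subset)

lemma nash_equilibrium_profile: "nash_equilibrium n f mu s \<Longrightarrow> consumption_profile n mu s"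
  by (simp add: nash_equilibrium_def)

lemma profile_nonneg:
  "consumption_profile n mu s \<Longrightarrow> R \<in> coalitions n \<Longrightarrow> j \<in> {1..n} \<Longrightarrow> s R j \<ge> 0"
  by (auto simp: consumption_profile_def)

lemma profile_outside:
  "consumption_profile n mu s \<Longrightarrow> R \<in> coalitions n \<Longrightarrow> j \<in> {1..n} \<Longrightarrow> j \<notin> R \<Longrightarrow> s R j = 0"
  by (auto simp: consumption_profile_def)

lemma profile_sum:
  "consumption_profile n mu s \<Longrightarrow> R \<in> coalitions n \<Longrightarrow> (\<Sum>j\<in>{1..n}. s R j) = mu R"
  by (auto simp: consumption_profile_def)

lemma load_nonneg: "consumption_profile n mu s \<Longrightarrow> j \<in> {1..n} \<Longrightarrow> load n s j \<ge> 0"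
  unfolding load_def by (rule sum_nonneg) (auto intro: profile_nonneg)

lemma sum_weighted_load:
  "(\<Sum>j\<in>{1..n}. h j * load n s j) = (\<Sum>R\<in>coalitions n. \<Sum>j\<in>{1..n}. (h j :: real) * s R j)"
  unfolding load_def sum_distrib_left by (rule sum.swap)

lemma nash_used_cost_eq_Min:
  assumes ne: "nash_equilibrium n f mu s" and R: "R \<in> coalitions n"
    and k: "k \<in> {1..n}" and used: "s R k > 0"
  shows "cost n f s k = Min (cost n f s ` R)"
proof -
  have "k \<in> R"
    using profile_outside[OF nash_equilibrium_profile[OF ne] R k] used by force
  moreover have "\<forall>j\<in>R. cost n f s k \<le> cost n f s j"
    using ne R k used by (auto simp: nash_equilibrium_def)
  ultimately show ?thesis
    using coalitionsD[OF R] by (intro Min_eqI[symmetric]) auto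
qed

lemma nash_cost_of_coalition:
  assumes ne: "nash_equilibrium n f mu s" and R: "R \<in> coalitions n"
  shows "(\<Sum>j\<in>{1..n}. cost n f s j * s R j) = Min (cost n f s ` R) * mu R"
proof -
  have cp: "consumption_profile n mu s" using ne by (rule nash_equilibrium_profile)
  have "(\<Sum>j\<in>{1..n}. cost n f s j * s R j) = (\<Sum>j\<in>{1..n}. Min (cost n f s ` R) * s R j)"
  proof (rule sum.cong)
    fix j assume j: "j \<in> {1..n}"
    show "cost n f s j * s R j = Min (cost n f s ` R) * s R j"
      using profile_nonneg[OF cp R j] nash_used_cost_eq_Min[OF ne R j]
      by (cases "s R j = 0") auto
  qed simp
  then show ?thesis by (simp only: sum_distrib_left[symmetric] profile_sum[OF cp R])
qed

lemma profile_cost_of_coalition_ge: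
  assumes cp: "consumption_profile n mu s" and R: "R \<in> coalitions n"
  shows "Min (h ` R) * mu R \<le> (\<Sum>j\<in>{1..n}. (h j :: real) * s R j)"
proof -
  have "Min (h ` R) * mu R = (\<Sum>j\<in>{1..n}. Min (h ` R) * s R j)"
    by (simp only: sum_distrib_left[symmetric] profile_sum[OF cp R])
  also have "\<dots> \<le> (\<Sum>j\<in>{1..n}. h j * s R j)"
  proof (rule sum_mono)
    fix j assume j: "j \<in> {1..n}"
    show "Min (h ` R) * s R j \<le> h j * s R j"
    proof (cases "j \<in> R")
      case True
      then have "Min (h ` R) \<le> h j" using coalitionsD[OF R] by (intro Min_le) auto
      then show ?thesis using profile_nonneg[OF cp R j] by (rule mult_right_mono)
    qed (simp add: profile_outside[OF cp R j])
  qed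
  finally show ?thesis .
qed

lemma nash_variational_inequality:
  assumes ne: "nash_equilibrium n f mu s" and cp': "consumption_profile n mu s'"
  shows "(\<Sum>j\<in>{1..n}. cost n f s j * load n s j) \<le> (\<Sum>j\<in>{1..n}. cost n f s j * load n s' j)"
  unfolding sum_weighted_load
  by (rule sum_mono) (simp only: nash_cost_of_coalition[OF ne] profile_cost_of_coalition_ge[OF cp'])

lemma mono_on_diff_mult_nonneg:
  fixes g :: "real \<Rightarrow> real"
  assumes "mono_on {0..} g" "x \<ge> 0" "y \<ge> 0"
  shows "(g x - g y) * (x - y) \<ge> 0"
proof (cases "x \<le> y")
  case True
  then have "g x \<le> g y" using assms by (auto intro: mono_onD)
  then show ?thesis using True by (simp add: mult_nonpos_nonpos)
next
  case False
  then have "g y \<le> g x" using assms by (auto intro: mono_onD)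
  then show ?thesis using False by simp
qed

lemma nash_costs_unique:
  assumes g: "is_game n f mu"
    and ne: "nash_equilibrium n f mu s" and ne': "nash_equilibrium n f mu s'"
    and j: "j \<in> {1..n}"
  shows "cost n f s j = cost n f s' j"
proof -
  have cp: "consumption_profile n mu s" and cp': "consumption_profile n mu s'"
    using ne ne' by (simp_all add: nash_equilibrium_profile)
  define d where "d i = (cost n f s i - cost n f s' i) * (load n s i - load n s' i)" for i
  have d_nonneg: "d i \<ge> 0" if i: "i \<in> {1..n}" for i
    unfolding d_def cost_def using g i load_nonneg[OF cp i] load_nonneg[OF cp' i]
    by (intro mono_on_diff_mult_nonneg) (auto simp: is_game_def)
  have "(\<Sum>i\<in>{1..n}. d i) =
      ((\<Sum>i\<in>{1..n}. cost n f s i * load n s i) - (\<Sum>i\<in>{1..n}. cost n f s i * load n s' i))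
    + ((\<Sum>i\<in>{1..n}. cost n f s' i * load n s' i) - (\<Sum>i\<in>{1..n}. cost n f s' i * load n s i))"
    unfolding d_def sum_subtractf[symmetric] sum.distrib[symmetric]
    by (rule sum.cong) (simp_all add: algebra_simps)
  also have "\<dots> \<le> 0"
    using nash_variational_inequality[OF ne cp'] nash_variational_inequality[OF ne' cp] by linarith
  moreover have "(\<Sum>i\<in>{1..n}. d i) \<ge> 0" using d_nonneg by (rule sum_nonneg)
  ultimately have "(\<Sum>i\<in>{1..n}. d i) = 0" by linarith
  then have "d j = 0" using sum_nonneg_eq_0_iff[of "{1..n}" d] d_nonneg j by auto
  then show ?thesis unfolding d_def by (auto simp: cost_def)
qed

lemma nash_level_load:
  assumes ne: "nash_equilibrium n f mu s"
  shows "(\<Sum>i\<in>{i\<in>{1..n}. cost n f s i = H}. load n s i) =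
         (\<Sum>R\<in>coalitions n. if Min (cost n f s ` R) = H then mu R else 0)"
proof -
  have cp: "consumption_profile n mu s" using ne by (rule nash_equilibrium_profile)
  have "(\<Sum>i\<in>{i\<in>{1..n}. cost n f s i = H}. s R i) =
        (if Min (cost n f s ` R) = H then mu R else 0)" if R: "R \<in> coalitions n" for R
  proof -
    have "(\<Sum>i\<in>{i\<in>{1..n}. cost n f s i = H}. s R i) =
          (\<Sum>i\<in>{1..n}. if cost n f s i = H then s R i else 0)"
      by (rule sum.inter_filter) simp
    also have "\<dots> = (\<Sum>i\<in>{1..n}. if Min (cost n f s ` R) = H then s R i else 0)"
    proof (rule sum.cong)
      fix i assume i: "i \<in> {1..n}"
      show "(if cost n f s i = H then s R i else 0) =
            (if Min (cost n f s ` R) = H then s R i else 0)"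
        using profile_nonneg[OF cp R i] nash_used_cost_eq_Min[OF ne R i]
        by (cases "s R i = 0") auto
    qed simp
    also have "\<dots> = (if Min (cost n f s ` R) = H then mu R else 0)"
      using profile_sum[OF cp R] by simp
    finally show ?thesis .
  qed
  then show ?thesis
    unfolding load_def by (subst sum.swap) (rule sum.cong, simp_all)
qed

lemma nash_level_loads_eq:
  assumes g: "is_game n f mu"
    and ne: "nash_equilibrium n f mu s" and ne': "nash_equilibrium n f mu s'"
  shows "(\<Sum>i\<in>{i\<in>{1..n}. cost n f s i = H}. load n s i) =
         (\<Sum>i\<in>{i\<in>{1..n}. cost n f s i = H}. load n s' i)"
proof -
  have same_cost: "\<And>i. i \<in> {1..n} \<Longrightarrow> cost n f s i = cost n f s' i"
    using nash_costs_unique[OF g ne ne'] .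
  have same_min_cost: "Min (cost n f s ` R) = Min (cost n f s' ` R)" if "R \<in> coalitions n" for R
    using same_cost coalitionsD[OF that] by (metis image_cong subsetD)
  have same_level: "{i\<in>{1..n}. cost n f s i = H} = {i\<in>{1..n}. cost n f s' i = H}"
    using same_cost by auto
  have "(\<Sum>i\<in>{i\<in>{1..n}. cost n f s i = H}. load n s i) =
        (\<Sum>R\<in>coalitions n. if Min (cost n f s ` R) = H then mu R else 0)"
    by (rule nash_level_load[OF ne])
  also have "\<dots> = (\<Sum>R\<in>coalitions n. if Min (cost n f s' ` R) = H then mu R else 0)"
    using same_min_cost by (intro sum.cong) auto
  also have "\<dots> = (\<Sum>i\<in>{i\<in>{1..n}. cost n f s i = H}. load n s' i)"
    unfolding same_level by (rule nash_level_load[OF ne', symmetric])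
  finally show ?thesis .
qed

lemma sum_eq_other_differs:
  assumes "finite A" "sum f A = sum g A" "j \<in> A" "f j \<noteq> (g j :: 'a :: ab_group_add)"
  shows "\<exists>j'\<in>A. j' \<noteq> j \<and> f j' \<noteq> g j'"
proof (rule ccontr)
  assume "\<not> ?thesis"
  then have "sum f (A - {j}) = sum g (A - {j})" by (intro sum.cong) auto
  then show False using assms by (simp add: sum.remove)
qed

lemma nash_load_change_plateau_height:
  assumes g: "is_game n f mu"
    and ne: "nash_equilibrium n f mu s" and ne': "nash_equilibrium n f mu s'"
    and i: "i \<in> {1..n}" and differs: "load n s i \<noteq> load n s' i"
  shows "plateau_height (f i) (cost n f s i)"
  unfolding plateau_height_def
  using differs nash_costs_unique[OF g ne ne' i] load_nonneg[OF nash_equilibrium_profile[OF ne] i]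
    load_nonneg[OF nash_equilibrium_profile[OF ne'] i]
  by (auto simp: cost_def)

theorem mainTheorem3:
  fixes n :: nat and f :: "nat \<Rightarrow> real \<Rightarrow> real" and mu :: "nat set \<Rightarrow> real"
  assumes "is_game n f mu"
  shows "(\<forall>R\<in>coalitions n. \<forall>s s' k k'.
            nash_equilibrium n f mu s \<and> nash_equilibrium n f mu s' \<and>
            k \<in> {1..n} \<and> k' \<in> {1..n} \<and> s R k > 0 \<and> s' R k' > 0 \<longrightarrow>
            cost n f s k = cost n f s' k')
       \<and> ((\<not> (\<exists>h. \<exists>j\<in>{1..n}. \<exists>j'\<in>{1..n}. j \<noteq> j' \<and>
                 plateau_height (f j) h \<and> plateau_height (f j') h)) \<longrightarrow>
          (\<forall>s s'. nash_equilibrium n f mu s \<and> nash_equilibrium n f mu s' \<longrightarrow>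
             (\<forall>j\<in>{1..n}. load n s j = load n s' j)))"
proof (intro conjI ballI allI impI; elim conjE)
  fix R s s' k k'
  assume R: "R \<in> coalitions n" and ne: "nash_equilibrium n f mu s" and ne': "nash_equilibrium n f mu s'"
    and "k \<in> {1..n}" "k' \<in> {1..n}" "s R k > 0" "s' R k' > 0"
  moreover have "cost n f s ` R = cost n f s' ` R"
    using nash_costs_unique[OF assms ne ne'] coalitionsD[OF R] by (intro image_cong) auto
  ultimately show "cost n f s k = cost n f s' k'" by (simp add: nash_used_cost_eq_Min)
next
  fix s s' j
  assume no_plateau: "\<not> (\<exists>h. \<exists>j\<in>{1..n}. \<exists>j'\<in>{1..n}. j \<noteq> j' \<and>
                 plateau_height (f j) h \<and> plateau_height (f j') h)"
    and ne: "nash_equilibrium n f mu s" and ne': "nash_equilibrium n f mu s'" and j: "j \<in> {1..n}"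
  show "load n s j = load n s' j"
  proof (rule ccontr)
    assume differs: "load n s j \<noteq> load n s' j"
    let ?L = "{i\<in>{1..n}. cost n f s i = cost n f s j}"
    have "\<exists>j'\<in>?L. j' \<noteq> j \<and> load n s j' \<noteq> load n s' j'"
      using j by (intro sum_eq_other_differs[OF _ nash_level_loads_eq[OF assms ne ne'] _ differs]) simp_all
    then obtain j' where j': "j' \<in> {1..n}" "j' \<noteq> j" "cost n f s j' = cost n f s j"
      and differs': "load n s j' \<noteq> load n s' j'" by blast
    have "plateau_height (f j') (cost n f s j)"
      using nash_load_change_plateau_height[OF assms ne ne' j'(1) differs'] j'(3) by simp
    moreover have "plateau_height (f j) (cost n f s j)"
      by (rule nash_load_change_plateau_height[OF assms ne ne' j differs])
    ultimately show False
      using no_plateau j j'(1,2) by blast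
  qed
qed

end
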